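(* Assume the standing setting below. For every $\beta>0$ and $R>0$, $$\limsup_{N\to\infty}A^{sf}_N(\beta,R)\le\limsup_{N\to\infty}\frac1N\log\mathbb{E}\,Z^{sf}_N(\beta,R)\le\max\Big(\beta\bar\lambda R^2,\ \frac{\beta^2R^4}{4\theta}\Big),$$ where $\bar\lambda$ and $\theta$ are the constants in condition (1) of Hypothesis H.
   Context: Standing setting (Hypothesis H). For each $N\ge1$, $J=J^{(N)}=(J_{ij})_{i,j=1}^N$ is a random real symmetric matrix from the symmetric Wigner ensemble (entries $J_{ij}$, $i\le j$, independent, $J_{ji}=J_{ij}$) with $\mathbb{E}J_{ij}=0$, $\mathbb{E}J_{ij}^2=J^2>0$, and there is $\theta_0>0$ with $\sup_{N,i,j}\mathbb{E}\,e^{\theta_0 J_{ij}^2/N}<\infty$; all matrices are defined on a common probability space. Let $\lambda_1,\dots,\lambda_N$ denote the eigenvalues of $J/\sqrt N$. Hypothesis H further requires: (1) there are constants $\bar\lambda>0$, $C_1>0$, $\theta>0$ such that for every $a>\bar\lambda$ and every eigenvalue $\lambda$ of $J/\sqrt N$, $P(|\lambda|\ge a)\le C_1e^{-\theta a^2N}$; (2) the empirical spectral distribution $\frac1N\sum_i\delta_{\lambda_i}$ converges as $N\to\infty$ to the semicircle law with density $\rho(\mu)=\frac{2\sqrt{\bar\lambda^2-\mu^2}}{\pi\bar\lambda^2}$ on $[-\bar\lambda,\bar\lambda]$. For $z\in\mathbb{R}^N$ the Hamiltonian is $H_N(z,J)=-\frac1{\sqrt N}\sum_{i,j=1}^N J_{ij}z_iz_j=-\langle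 z,(J/\sqrt N)z\rangle$, which in an orthonormal eigenbasis of $J/\sqrt N$ reads $-\sum_i\lambda_iz_i^2$. $\beta>0$ is the inverse temperature. Spherical model: for $R>0$, $\sigma_{R,N}$ is the uniform probability measure on the sphere $\{z\in\mathbb{R}^N:\|z\|=R\sqrt N\}$; $Z^{sf}_N(\beta,R)=\int e^{-\beta H_N(z,J)}\,d\sigma_{R,N}(z)$ and $A^{sf}_N(\beta,R)=\frac1N\mathbb{E}\log Z^{sf}_N(\beta,R)$. *)

theory Defs
  imports "HOL-Probability.Probability" "Jordan_Normal_Form.Char_Poly"
begin

text \<open>Vectors in R^N are represented as functions nat => real, only the
coordinates 0..N-1 being relevant; Lebesgue measure on R^N is the product
measure PiM {..<N} (%_. lborel).\<close>

definition eucl_norm :: "nat \<Rightarrow> (nat \<Rightarrow> real) \<Rightarrow> real" where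
  "eucl_norm N z = sqrt (\<Sum>i<N. (z i)\<^sup>2)"

text \<open>Uniform probability measure on the sphere of radius r in R^N, as the
normalized cone measure: the image of the uniform distribution on the unit
ball under the radial projection x |-> r x / |x|.  (For the Euclidean sphere
the cone measure coincides with normalized surface measure.)\<close>

definition unif_sphere :: "nat \<Rightarrow> real \<Rightarrow> (nat \<Rightarrow> real) measure" where
  "unif_sphere N r =
     distr (uniform_measure (PiM {..<N} (\<lambda>_. lborel))
              {z \<in> space (PiM {..<N} (\<lambda>_. lborel)). eucl_norm N z \<le> 1})
           (PiM {..<N} (\<lambda>_. borel))
           (\<lambda>z. restrict (\<lambda>i. r * z i / eucl_norm N z) {..<N})"

definition sigma_RN :: "real \<Rightarrow> nat \<Rightarrow> (nat \<Rightarrow> real) measure" where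
  "sigma_RN R N = unif_sphere N (R * sqrt (real N))"

definition scaled_mat :: "nat \<Rightarrow> (nat \<Rightarrow> nat \<Rightarrow> real) \<Rightarrow> real mat" where
  "scaled_mat N J = mat N N (\<lambda>(i,j). J i j / sqrt (real N))"

definition hamiltonian :: "nat \<Rightarrow> (nat \<Rightarrow> nat \<Rightarrow> real) \<Rightarrow> (nat \<Rightarrow> real) \<Rightarrow> real" where
  "hamiltonian N J z = - (1 / sqrt (real N)) * (\<Sum>i<N. \<Sum>j<N. J i j * z i * z j)"

definition Z_sf :: "nat \<Rightarrow> real \<Rightarrow> real \<Rightarrow> (nat \<Rightarrow> nat \<Rightarrow> real) \<Rightarrow> real" where
  "Z_sf N \<beta> R J = (\<integral>z. exp (- \<beta> * hamiltonian N J z) \<partial>sigma_RN R N)"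

definition esd_avg :: "nat \<Rightarrow> real mat \<Rightarrow> (real \<Rightarrow> real) \<Rightarrow> real" where
  "esd_avg N A f = (1 / real N) *
     (\<Sum>x\<in>{x. poly (char_poly A) x = 0}. real (order x (char_poly A)) * f x)"

definition semicircle_density :: "real \<Rightarrow> real \<Rightarrow> real" where
  "semicircle_density lb \<mu> =
     (if \<bar>\<mu>\<bar> \<le> lb then 2 * sqrt (lb\<^sup>2 - \<mu>\<^sup>2) / (pi * lb\<^sup>2) else 0)"

end

theory Submission
  imports Defs
begin

text \<open>
  The Hamiltonian is minus the quadratic form of \<open>J/\<surd>N\<close>, and a point of the sphere of radius
  \<open>R\<surd>N\<close> has squared norm \<open>R\<^sup>2N\<close>; hence \<open>|ln Z\<^sub>N| \<le> \<beta>R\<^sup>2N\<rho>\<close>, where \<open>\<rho>\<close> is the largest absolute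
  eigenvalue of \<open>J/\<surd>N\<close> (the maximum of the Rayleigh quotient). The first inequality is then
  Jensen's inequality for the concave logarithm. For the second, split the probability space
  according to the shell \<open>a\<^sub>0 + k\<delta> \<le> \<rho> < a\<^sub>0 + (k + 1)\<delta>\<close>: there \<open>Z\<^sub>N \<le> exp (\<beta>R\<^sup>2N(a\<^sub>0 + (k + 1)\<delta>))\<close>,
  while condition (1) of Hypothesis H gives the shell probability at most
  \<open>C\<^sub>1 exp (-\<theta>(a\<^sub>0 + k\<delta>)\<^sup>2N)\<close>. Completing the square with a fraction \<open>\<theta> - \<epsilon>\<close> of the Gaussian
  decay and keeping \<open>\<epsilon>\<close> for summability over \<open>k\<close> shows that \<open>E Z\<^sub>N\<close> is at most a constant times
  \<open>exp (N max (\<beta>R\<^sup>2a\<^sub>0, \<beta>R\<^sup>2\<delta> + (\<beta>R\<^sup>2)\<^sup>2/(4(\<theta> - \<epsilon>))))\<close>; letting \<open>a\<^sub>0\<close> decrease to the spectral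
  edge and \<open>\<delta>, \<epsilon>\<close> to \<open>0\<close> gives the rate. Measurability of \<open>\<rho>\<close> in the disorder comes from
  computing it as a supremum over the countably many rational test vectors.
\<close>

section \<open>Quadratic forms and the largest absolute eigenvalue\<close>

definition quad_form :: "nat \<Rightarrow> (nat \<Rightarrow> nat \<Rightarrow> real) \<Rightarrow> (nat \<Rightarrow> real) \<Rightarrow> real" where
  "quad_form N A z = (\<Sum>i<N. \<Sum>j<N. A i j * z i * z j)"

definition sqnorm :: "nat \<Rightarrow> (nat \<Rightarrow> real) \<Rightarrow> real" where
  "sqnorm N z = (\<Sum>i<N. (z i)\<^sup>2)"

lemma quad_form_cong: "(\<And>i. i < N \<Longrightarrow> x i = y i) \<Longrightarrow> quad_form N A x = quad_form N A y"
  unfolding quad_form_def by (intro sum.cong refl) simp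

lemma sqnorm_cong: "(\<And>i. i < N \<Longrightarrow> x i = y i) \<Longrightarrow> sqnorm N x = sqnorm N y"
  unfolding sqnorm_def by (intro sum.cong refl) simp

lemma quad_form_scale: "quad_form N A (\<lambda>i. c * x i) = c\<^sup>2 * quad_form N A x"
  unfolding quad_form_def by (simp add: sum_distrib_left power2_eq_square algebra_simps)

lemma sqnorm_scale: "sqnorm N (\<lambda>i. c * x i) = c\<^sup>2 * sqnorm N x"
  unfolding sqnorm_def by (simp add: sum_distrib_left power2_eq_square algebra_simps)

lemma quad_form_uminus: "quad_form N (\<lambda>i j. - A i j) z = - quad_form N A z"
  unfolding quad_form_def by (simp add: sum_negf)

lemma sqnorm_nonneg: "0 \<le> sqnorm N x"
  unfolding sqnorm_def by (simp add: sum_nonneg)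

lemma sqnorm_ge_component: "i < N \<Longrightarrow> (x i)\<^sup>2 \<le> sqnorm N x"
  unfolding sqnorm_def by (rule member_le_sum) auto

lemma sqnorm_eq_0_iff: "sqnorm N x = 0 \<longleftrightarrow> (\<forall>i<N. x i = 0)"
  unfolding sqnorm_def by (auto simp: sum_nonneg_eq_0_iff)

lemma abs_component_le_1: "sqnorm N x \<le> 1 \<Longrightarrow> i < N \<Longrightarrow> \<bar>x i\<bar> \<le> 1"
  using sqnorm_ge_component[of i N x] abs_square_le_1 by fastforce

lemma quad_form_eq_0: "sqnorm N x = 0 \<Longrightarrow> quad_form N A x = 0"
  unfolding quad_form_def by (simp add: sqnorm_eq_0_iff)

definition symmetric_on :: "nat \<Rightarrow> (nat \<Rightarrow> nat \<Rightarrow> real) \<Rightarrow> bool" where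
  "symmetric_on N A \<longleftrightarrow> (\<forall>i<N. \<forall>j<N. A i j = A j i)"

lemma quad_form_add:
  assumes "symmetric_on N A"
  shows "quad_form N A (\<lambda>i. x i + t * u i)
    = quad_form N A x + 2 * t * (\<Sum>i<N. u i * (\<Sum>j<N. A i j * x j)) + t\<^sup>2 * quad_form N A u"
proof -
  have swap: "(\<Sum>i<N. \<Sum>j<N. A i j * x i * u j) = (\<Sum>i<N. \<Sum>j<N. A i j * u i * x j)"
    using assms by (subst sum.swap) (auto intro!: sum.cong simp: symmetric_on_def mult_ac)
  have "quad_form N A (\<lambda>i. x i + t * u i) = quad_form N A x + t * (\<Sum>i<N. \<Sum>j<N. A i j * u i * x j)
      + t * (\<Sum>i<N. \<Sum>j<N. A i j * x i * u j) + t\<^sup>2 * quad_form N A u"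
    unfolding quad_form_def
    by (simp add: algebra_simps power2_eq_square sum.distrib sum_distrib_left)
  then show ?thesis
    unfolding swap by (simp add: sum_distrib_left algebra_simps)
qed

lemma sqnorm_add:
  "sqnorm N (\<lambda>i. x i + t * u i) = sqnorm N x + 2 * t * (\<Sum>i<N. x i * u i) + t\<^sup>2 * sqnorm N u"
  unfolding sqnorm_def by (simp add: power2_eq_square algebra_simps sum.distrib sum_distrib_left)

lemma continuous_on_quad_form: "continuous_on UNIV (quad_form N A)"
  unfolding quad_form_def
  by (intro continuous_intros continuous_on_product_then_coordinatewise continuous_on_id)

lemma continuous_on_sqnorm: "continuous_on UNIV (sqnorm N)"
  unfolding sqnorm_def
  by (intro continuous_intros continuous_on_product_then_coordinatewise continuous_on_id)

text \<open>Coordinates from \<open>N\<close> on are pinned to \<open>0\<close>: only then is the sphere compact in the product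
  topology of \<open>nat \<Rightarrow> real\<close>.\<close>

lemma compact_unit_sphere:
  "compact (PiE UNIV (\<lambda>i::nat. if i < N then {-1..1::real} else {0}) \<inter> {z. sqnorm N z = 1})"
proof -
  have "compactin (product_topology (\<lambda>i. euclidean) UNIV)
      (PiE UNIV (\<lambda>i::nat. if i < N then {-1..1::real} else {0}))"
    by (subst compactin_PiE) auto
  then have "compact (PiE UNIV (\<lambda>i::nat. if i < N then {-1..1::real} else {0}))"
    by (simp add: euclidean_product_topology)
  then show ?thesis
    by (intro compact_Int_closed closed_Collect_eq continuous_on_sqnorm continuous_on_const)
qed

lemma quad_form_le_max:
  assumes "N \<ge> 1"
  shows "\<exists>x. sqnorm N x = 1 \<and> (\<forall>z. quad_form N A z \<le> quad_form N A x * sqnorm N z)"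
proof -
  define K where "K = PiE UNIV (\<lambda>i::nat. if i < N then {-1..1::real} else {0}) \<inter> {z. sqnorm N z = 1}"
  have "compact K" unfolding K_def by (rule compact_unit_sphere)
  moreover have "(\<lambda>i. if i = 0 then 1 else 0) \<in> K"
    using assms by (auto simp: K_def sqnorm_def PiE_iff if_distrib[of power2] sum.If_cases)
  ultimately obtain x where x: "x \<in> K" and x_max: "\<And>y. y \<in> K \<Longrightarrow> quad_form N A y \<le> quad_form N A x"
    using continuous_attains_sup[of K "quad_form N A"] continuous_on_quad_form continuous_on_subset
    by blast
  have "quad_form N A z \<le> quad_form N A x * sqnorm N z" for z
  proof (cases "sqnorm N z = 0")
    case True
    then show ?thesis by (simp add: quad_form_eq_0)
  next
    case False
    define s where "s = sqrt (sqnorm N z)"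
    have s: "s > 0" "s\<^sup>2 = sqnorm N z"
      using False sqnorm_nonneg[of N z] by (auto simp: s_def)
    define y where "y = (\<lambda>i. if i < N then z i / s else 0)"
    have y_sqnorm: "sqnorm N y = (1/s)\<^sup>2 * sqnorm N z" and y_quad: "quad_form N A y = (1/s)\<^sup>2 * quad_form N A z"
      by (subst sqnorm_scale[symmetric] quad_form_scale[symmetric],
          rule sqnorm_cong quad_form_cong, simp add: y_def)+
    have "y \<in> K"
    proof -
      have "sqnorm N y = 1" using y_sqnorm s False by (simp add: power_divide)
      moreover have "\<bar>y i\<bar> \<le> 1" if "i < N" for i
        using abs_component_le_1[of N y i] calculation that by simp
      ultimately show ?thesis
        unfolding K_def PiE_iff by (auto simp: abs_le_iff) (auto simp: y_def)
    qed
    then have "(1/s)\<^sup>2 * quad_form N A z \<le> quad_form N A x"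
      using x_max y_quad by metis
    moreover have "sqnorm N z > 0" using s by (metis zero_less_power)
    ultimately show ?thesis
      using s by (simp add: power_divide divide_le_eq mult.commute)
  qed
  moreover have "sqnorm N x = 1" using x by (simp add: K_def)
  ultimately show ?thesis by blast
qed

lemma nonneg_quadratic_linear_coeff_0:
  fixes b g :: real
  assumes "\<And>t. 0 \<le> 2 * t * b + t\<^sup>2 * g"
  shows "b = 0"
proof (rule ccontr)
  assume b: "b \<noteq> 0"
  define G where "G = \<bar>g\<bar> + 1"
  have G: "G > 0" "g < G" unfolding G_def by auto
  have "0 \<le> 2 * (-b/G) * b + (-b/G)\<^sup>2 * g" by (rule assms)
  also have "\<dots> = b\<^sup>2/G * (g/G - 2)" using G by (simp add: field_simps power2_eq_square)
  also have "\<dots> < 0" using b G by (intro mult_pos_neg) (simp_all add: field_simps)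
  finally show False by simp
qed

text \<open>A maximiser \<open>x\<close> of the Rayleigh quotient is an eigenvector: along the residual
  \<open>u = \<mu> x - A x\<close>, the function \<open>\<mu> |x + t u|\<^sup>2 - q(x + t u) \<ge> 0\<close> vanishes at \<open>t = 0\<close> and has
  derivative \<open>2 |u|\<^sup>2\<close> there.\<close>

lemma quad_form_max_eigenvector:
  assumes "N \<ge> 1" and sym: "symmetric_on N A"
  shows "\<exists>x. sqnorm N x = 1 \<and> (\<forall>z. quad_form N A z \<le> quad_form N A x * sqnorm N z)
          \<and> (\<forall>i<N. (\<Sum>j<N. A i j * x j) = quad_form N A x * x i)"
proof -
  obtain x where x1: "sqnorm N x = 1" and x_max: "\<And>z. quad_form N A z \<le> quad_form N A x * sqnorm N z"
    using quad_form_le_max[OF assms(1)] by blast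
  define \<mu> where "\<mu> = quad_form N A x"
  define u where "u = (\<lambda>i. \<mu> * x i - (\<Sum>j<N. A i j * x j))"
  have "0 \<le> 2 * t * (\<Sum>i<N. (u i)\<^sup>2) + t\<^sup>2 * (\<mu> * sqnorm N u - quad_form N A u)" for t
  proof -
    have "0 \<le> \<mu> * sqnorm N (\<lambda>i. x i + t * u i) - quad_form N A (\<lambda>i. x i + t * u i)"
      using x_max[of "\<lambda>i. x i + t * u i"] by (simp add: \<mu>_def mult.commute)
    also have "\<dots> = \<mu> * (1 + 2 * t * (\<Sum>i<N. x i * u i) + t\<^sup>2 * sqnorm N u)
        - (\<mu> + 2 * t * (\<Sum>i<N. u i * (\<Sum>j<N. A i j * x j)) + t\<^sup>2 * quad_form N A u)"
      by (simp only: quad_form_add[OF sym] sqnorm_add x1 \<mu>_def)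
    also have "\<dots> = 2 * t * (\<Sum>i<N. u i * (\<mu> * x i - (\<Sum>j<N. A i j * x j)))
        + t\<^sup>2 * (\<mu> * sqnorm N u - quad_form N A u)"
      by (simp add: algebra_simps sum_subtractf sum_distrib_left)
    finally show ?thesis by (simp add: u_def power2_eq_square)
  qed
  then have "(\<Sum>i<N. (u i)\<^sup>2) = 0" by (rule nonneg_quadratic_linear_coeff_0)
  then have "\<forall>i<N. u i = 0" using sqnorm_eq_0_iff[of N u] by (simp add: sqnorm_def)
  then show ?thesis using x1 x_max by (auto simp: u_def \<mu>_def)
qed

definition mat_of :: "nat \<Rightarrow> (nat \<Rightarrow> nat \<Rightarrow> real) \<Rightarrow> real mat" where
  "mat_of N A = mat N N (\<lambda>(i, j). A i j)"

lemma mat_of_carrier: "mat_of N A \<in> carrier_mat N N"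
  by (simp add: mat_of_def)

lemma mat_of_mult_vec_nth:
  "i < N \<Longrightarrow> v \<in> carrier_vec N \<Longrightarrow> (mat_of N A *\<^sub>v v) $ i = (\<Sum>j<N. A i j * v $ j)"
  unfolding mat_of_def by (simp add: scalar_prod_def atLeast0LessThan)

lemma eigenvalue_mat_ofI:
  assumes "sqnorm N x \<noteq> 0" and "\<forall>i<N. (\<Sum>j<N. A i j * x j) = k * x i"
  shows "eigenvalue (mat_of N A) k"
proof -
  have "vec N x \<noteq> 0\<^sub>v N"
    using assms(1) by (auto simp: sqnorm_eq_0_iff vec_eq_iff)
  moreover have "mat_of N A *\<^sub>v vec N x = k \<cdot>\<^sub>v vec N x"
    by (rule eq_vecI) (auto simp: mat_of_mult_vec_nth assms(2), simp add: mat_of_def)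
  ultimately show ?thesis
    unfolding eigenvalue_def eigenvector_def by (metis carrier_matD(1) mat_of_carrier vec_carrier)
qed

lemma eigenvalue_mat_ofE:
  assumes "eigenvalue (mat_of N A) k"
  obtains v where "sqnorm N v = 1" "quad_form N A v = k"
proof -
  obtain w where w: "w \<in> carrier_vec N" "w \<noteq> 0\<^sub>v N" "mat_of N A *\<^sub>v w = k \<cdot>\<^sub>v w"
    using assms unfolding eigenvalue_def eigenvector_def by (auto simp: mat_of_def)
  define y where "y = (\<lambda>i. w $ i)"
  have eq: "(\<Sum>j<N. A i j * y j) = k * y i" if "i < N" for i
    using arg_cong[OF w(3), of "\<lambda>v. v $ i"] that w(1) by (simp add: mat_of_mult_vec_nth y_def)
  have "quad_form N A y = (\<Sum>i<N. y i * (\<Sum>j<N. A i j * y j))"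
    unfolding quad_form_def by (simp add: sum_distrib_left algebra_simps)
  also have "\<dots> = (\<Sum>i<N. k * (y i)\<^sup>2)"
    by (intro sum.cong refl) (simp add: eq power2_eq_square)
  finally have y_quad: "quad_form N A y = k * sqnorm N y"
    by (simp add: sqnorm_def sum_distrib_left)
  have "sqnorm N y \<noteq> 0"
    using w(1,2) by (auto simp: sqnorm_eq_0_iff y_def vec_eq_iff)
  then have s: "sqnorm N y > 0" using sqnorm_nonneg[of N y] by simp
  define v where "v = (\<lambda>i. (1 / sqrt (sqnorm N y)) * y i)"
  have "sqnorm N v = 1" "quad_form N A v = k"
    using s y_quad unfolding v_def sqnorm_scale quad_form_scale by (simp_all add: power_divide)
  then show thesis by (rule that)
qed

text \<open>The smallest eigenvalue is obtained by maximising the form of \<open>-A\<close>.\<close>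

lemma quad_form_between_eigenvalues:
  assumes N: "N \<ge> 1" and sym: "symmetric_on N A"
  obtains \<mu> \<nu> where "eigenvalue (mat_of N A) \<mu>" "eigenvalue (mat_of N A) \<nu>"
    "\<And>z. \<nu> * sqnorm N z \<le> quad_form N A z" "\<And>z. quad_form N A z \<le> \<mu> * sqnorm N z"
proof -
  obtain x where x1: "sqnorm N x = 1" and x_max: "\<forall>z. quad_form N A z \<le> quad_form N A x * sqnorm N z"
     and x_eig: "\<forall>i<N. (\<Sum>j<N. A i j * x j) = quad_form N A x * x i"
    using quad_form_max_eigenvector[OF N sym] by blast
  obtain y where y1: "sqnorm N y = 1"
     and y_max: "\<forall>z. quad_form N (\<lambda>i j. - A i j) z \<le> quad_form N (\<lambda>i j. - A i j) y * sqnorm N z"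
     and y_eig: "\<forall>i<N. (\<Sum>j<N. - A i j * y j) = quad_form N (\<lambda>i j. - A i j) y * y i"
  proof -
    have "symmetric_on N (\<lambda>i j. - A i j)" using sym by (simp add: symmetric_on_def)
    from quad_form_max_eigenvector[OF N this] that show thesis by blast
  qed
  show thesis
  proof
    show "eigenvalue (mat_of N A) (quad_form N A x)"
      using x1 x_eig by (intro eigenvalue_mat_ofI) auto
    show "eigenvalue (mat_of N A) (quad_form N A y)"
      using y1 y_eig by (intro eigenvalue_mat_ofI) (auto simp: quad_form_uminus sum_negf)
    show "quad_form N A y * sqnorm N z \<le> quad_form N A z" for z
      using y_max by (simp add: quad_form_uminus)
    show "quad_form N A z \<le> quad_form N A x * sqnorm N z" for z
      using x_max by simp
  qed
qed

definition max_abs_eigenvalue :: "real mat \<Rightarrow> real" where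
  "max_abs_eigenvalue B = Max (abs ` {k. eigenvalue B k})"

lemma finite_eigenvalues:
  fixes B :: "real mat"
  assumes "B \<in> carrier_mat n n"
  shows "finite {k. eigenvalue B k}"
proof -
  have "char_poly B \<noteq> 0"
    using degree_monic_char_poly[OF assms] by auto
  then show ?thesis
    using poly_roots_finite by (simp add: eigenvalue_root_char_poly[OF assms])
qed

lemma symmetric_has_eigenvalue:
  assumes "N \<ge> 1" and "symmetric_on N A"
  shows "{k. eigenvalue (mat_of N A) k} \<noteq> {}"
  by (rule quad_form_between_eigenvalues[OF assms]) auto

lemma abs_eigenvalue_le_max:
  assumes "eigenvalue (mat_of N A) k"
  shows "\<bar>k\<bar> \<le> max_abs_eigenvalue (mat_of N A)"
  unfolding max_abs_eigenvalue_def
  using assms finite_eigenvalues[OF mat_of_carrier] by (intro Max_ge) auto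

lemma max_abs_eigenvalue_attained:
  assumes "N \<ge> 1" and "symmetric_on N A"
  obtains k where "eigenvalue (mat_of N A) k" "\<bar>k\<bar> = max_abs_eigenvalue (mat_of N A)"
proof -
  have "max_abs_eigenvalue (mat_of N A) \<in> abs ` {k. eigenvalue (mat_of N A) k}"
    unfolding max_abs_eigenvalue_def
    using finite_eigenvalues[OF mat_of_carrier] symmetric_has_eigenvalue[OF assms]
    by (intro Max_in) auto
  then show thesis using that by auto
qed

lemma max_abs_eigenvalue_ge_iff:
  assumes "N \<ge> 1" and "symmetric_on N A"
  shows "a \<le> max_abs_eigenvalue (mat_of N A) \<longleftrightarrow> (\<exists>k. eigenvalue (mat_of N A) k \<and> a \<le> \<bar>k\<bar>)"
  using max_abs_eigenvalue_attained[OF assms] abs_eigenvalue_le_max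
  by (metis order.trans order.refl)

lemma max_abs_eigenvalue_nonneg:
  assumes "N \<ge> 1" and "symmetric_on N A"
  shows "0 \<le> max_abs_eigenvalue (mat_of N A)"
  by (rule max_abs_eigenvalue_attained[OF assms]) auto

lemma abs_quad_form_le:
  assumes "N \<ge> 1" and "symmetric_on N A"
  shows "\<bar>quad_form N A z\<bar> \<le> max_abs_eigenvalue (mat_of N A) * sqnorm N z"
proof -
  obtain \<mu> \<nu> where ev: "eigenvalue (mat_of N A) \<mu>" "eigenvalue (mat_of N A) \<nu>"
    and bounds: "\<And>z. \<nu> * sqnorm N z \<le> quad_form N A z" "\<And>z. quad_form N A z \<le> \<mu> * sqnorm N z"
    using quad_form_between_eigenvalues[OF assms] by blast
  have "\<mu> * sqnorm N z \<le> max_abs_eigenvalue (mat_of N A) * sqnorm N z"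
    using abs_eigenvalue_le_max[OF ev(1)] by (intro mult_right_mono sqnorm_nonneg) linarith
  moreover have "- \<nu> * sqnorm N z \<le> max_abs_eigenvalue (mat_of N A) * sqnorm N z"
    using abs_eigenvalue_le_max[OF ev(2)] by (intro mult_right_mono sqnorm_nonneg) linarith
  ultimately show ?thesis using bounds[of z] by (simp add: abs_le_iff)
qed

lemma abs_quad_form_le_sum_abs:
  assumes "sqnorm N v \<le> 1"
  shows "\<bar>quad_form N A v\<bar> \<le> (\<Sum>i<N. \<Sum>j<N. \<bar>A i j\<bar>)"
proof -
  have "\<bar>quad_form N A v\<bar> \<le> (\<Sum>i<N. \<Sum>j<N. \<bar>A i j\<bar> * (\<bar>v i\<bar> * \<bar>v j\<bar>))"
    unfolding quad_form_def
    by (rule order_trans[OF sum_abs sum_mono[OF order_trans[OF sum_abs]]])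
       (simp add: abs_mult mult.assoc)
  also have "\<dots> \<le> (\<Sum>i<N. \<Sum>j<N. \<bar>A i j\<bar>)"
    using abs_component_le_1[OF assms]
    by (intro sum_mono mult_right_le_one_le mult_le_one) auto
  finally show ?thesis .
qed

lemma max_abs_eigenvalue_le_sum_abs:
  assumes "N \<ge> 1" and "symmetric_on N A"
  shows "max_abs_eigenvalue (mat_of N A) \<le> (\<Sum>i<N. \<Sum>j<N. \<bar>A i j\<bar>)"
proof -
  obtain k where ev: "eigenvalue (mat_of N A) k" and "\<bar>k\<bar> = max_abs_eigenvalue (mat_of N A)"
    by (rule max_abs_eigenvalue_attained[OF assms])
  moreover obtain v where "sqnorm N v = 1" "quad_form N A v = k"
    using eigenvalue_mat_ofE[OF ev] .
  ultimately show ?thesis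
    using abs_quad_form_le_sum_abs[of N v A] by simp
qed

section \<open>Measurability of the largest absolute eigenvalue\<close>

definition rat_unit_ball :: "nat \<Rightarrow> (nat \<Rightarrow> real) set" where
  "rat_unit_ball N = {w. (\<forall>i. w i \<in> \<rat>) \<and> (\<forall>i\<ge>N. w i = 0) \<and> sqnorm N w \<le> 1}"

lemma countable_rat_unit_ball: "countable (rat_unit_ball N)"
proof -
  have "rat_unit_ball N \<subseteq> (\<lambda>f i. if i < N then f i else 0) ` (PiE {..<N} (\<lambda>_. \<rat>))"
  proof
    fix w assume w: "w \<in> rat_unit_ball N"
    then have "w = (\<lambda>i. if i < N then restrict w {..<N} i else 0)"
      by (auto simp: rat_unit_ball_def fun_eq_iff)
    moreover have "restrict w {..<N} \<in> PiE {..<N} (\<lambda>_. \<rat>)"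
      using w by (auto simp: rat_unit_ball_def)
    ultimately show "w \<in> (\<lambda>f i. if i < N then f i else 0) ` (PiE {..<N} (\<lambda>_. \<rat>))" by blast
  qed
  moreover have "countable (PiE {..<N} (\<lambda>_. \<rat>::real set))"
    by (intro countable_PiE) (auto simp: countable_rat)
  then have "countable ((\<lambda>f i. if i < N then f i else 0) ` (PiE {..<N} (\<lambda>_. \<rat>::real set)))"
    by (rule countable_image)
  ultimately show ?thesis by (rule countable_subset)
qed

text \<open>Rounding towards zero keeps the rational approximant inside the unit ball.\<close>

definition round_to_zero :: "real \<Rightarrow> real \<Rightarrow> real" where
  "round_to_zero K x = (if x \<ge> 0 then of_int \<lfloor>x * K\<rfloor> / K else of_int \<lceil>x * K\<rceil> / K)"

lemma round_to_zero_Rats: "K \<in> \<rat> \<Longrightarrow> round_to_zero K x \<in> \<rat>"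
  unfolding round_to_zero_def by auto

lemma round_to_zero_le:
  assumes "K > 0"
  shows "\<bar>round_to_zero K x\<bar> \<le> \<bar>x\<bar>" "\<bar>round_to_zero K x - x\<bar> \<le> 1 / K"
proof -
  have floor: "of_int \<lfloor>x * K\<rfloor> \<le> x * K" "x * K < of_int \<lfloor>x * K\<rfloor> + 1" by linarith+
  have ceiling: "x * K \<le> of_int \<lceil>x * K\<rceil>" "of_int \<lceil>x * K\<rceil> < x * K + 1" by linarith+
  show "\<bar>round_to_zero K x\<bar> \<le> \<bar>x\<bar>"
  proof (cases "x \<ge> 0")
    case True
    then have "0 \<le> x * K" using assms by simp
    then show ?thesis
      using True assms floor by (simp add: round_to_zero_def divide_le_eq abs_of_nonneg)
  next
    case False
    then have "x * K \<le> 0" using assms by (simp add: mult_nonpos_nonneg)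
    then have "of_int \<lceil>x * K\<rceil> / K \<le> 0" using assms by (simp add: divide_nonpos_pos)
    moreover have "x \<le> of_int \<lceil>x * K\<rceil> / K" using assms ceiling by (simp add: le_divide_eq)
    ultimately show ?thesis using False by (simp add: round_to_zero_def)
  qed
  have "round_to_zero K x - x
      = ((if x \<ge> 0 then of_int \<lfloor>x * K\<rfloor> else of_int \<lceil>x * K\<rceil>) - x * K) / K"
    using assms by (simp add: round_to_zero_def field_simps)
  moreover have "\<bar>(if x \<ge> 0 then of_int \<lfloor>x * K\<rfloor> else of_int \<lceil>x * K\<rceil>) - x * K\<bar> \<le> (1::real)"
  proof (cases "x \<ge> 0")
    case True
    with floor show ?thesis by (simp only: True if_True abs_le_iff) linarith
  next
    case False
    with ceiling show ?thesis by (simp only: False if_False abs_le_iff) linarith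
  qed
  ultimately show "\<bar>round_to_zero K x - x\<bar> \<le> 1 / K"
    using assms by (simp add: abs_div divide_right_mono)
qed

lemma abs_mult_diff_le:
  fixes a b c d e :: real
  assumes "\<bar>a\<bar> \<le> 1" "\<bar>d\<bar> \<le> 1" "\<bar>a - c\<bar> \<le> e" "\<bar>b - d\<bar> \<le> e"
  shows "\<bar>a * b - c * d\<bar> \<le> 2 * e"
proof -
  have "\<bar>a * b - c * d\<bar> = \<bar>a * (b - d) + d * (a - c)\<bar>"
    by (simp add: algebra_simps)
  also have "\<dots> \<le> \<bar>a\<bar> * \<bar>b - d\<bar> + \<bar>d\<bar> * \<bar>a - c\<bar>"
    by (metis abs_mult abs_triangle_ineq)
  also have "\<dots> \<le> 1 * e + 1 * e"
    using assms by (intro add_mono mult_mono) auto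
  finally show ?thesis by simp
qed

lemma quad_form_approx_rat_unit_ball:
  assumes v: "sqnorm N v \<le> 1" and e: "e > 0"
  shows "\<exists>w\<in>rat_unit_ball N. \<bar>quad_form N A v - quad_form N A w\<bar> < e"
proof -
  define S where "S = (\<Sum>i<N. \<Sum>j<N. \<bar>A i j\<bar>)"
  define K :: real where "K = of_nat (nat \<lceil>2 * S / e\<rceil> + 1)"
  have K: "K > 0" "K \<in> \<rat>" "2 * S / e < K" unfolding K_def by simp_all linarith
  define w where "w = (\<lambda>i. if i < N then round_to_zero K (v i) else 0)"
  have v1: "\<bar>v i\<bar> \<le> 1" if "i < N" for i using abs_component_le_1[OF v that] .
  have wv: "\<bar>w i\<bar> \<le> \<bar>v i\<bar>" "\<bar>w i - v i\<bar> \<le> 1 / K" if "i < N" for i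
    using that round_to_zero_le[OF K(1)] by (auto simp: w_def)
  have "sqnorm N w \<le> sqnorm N v" unfolding sqnorm_def
    by (intro sum_mono) (simp add: abs_le_square_iff[symmetric] wv(1))
  then have "w \<in> rat_unit_ball N"
    using v K(2) by (auto simp: rat_unit_ball_def w_def round_to_zero_Rats)
  moreover have "\<bar>quad_form N A v - quad_form N A w\<bar> < e"
  proof -
    have "\<bar>A i j * v i * v j - A i j * w i * w j\<bar> \<le> \<bar>A i j\<bar> * (2 / K)" if "i < N" "j < N" for i j
    proof -
      have "\<bar>v i * v j - w i * w j\<bar> \<le> 2 * (1 / K)"
        using v1 wv that by (intro abs_mult_diff_le) (auto simp: abs_minus_commute intro: order_trans)
      then have "\<bar>A i j\<bar> * \<bar>v i * v j - w i * w j\<bar> \<le> \<bar>A i j\<bar> * (2 / K)"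
        by (intro mult_left_mono) simp_all
      then show ?thesis by (simp add: abs_mult[symmetric] algebra_simps)
    qed
    then have "\<bar>quad_form N A v - quad_form N A w\<bar> \<le> (\<Sum>i<N. \<Sum>j<N. \<bar>A i j\<bar> * (2 / K))"
      unfolding quad_form_def sum_subtractf[symmetric]
      by (intro order_trans[OF sum_abs sum_mono] order_trans[OF sum_abs sum_mono]) auto
    also have "\<dots> = S * (2 / K)" unfolding S_def sum_distrib_right ..
    also have "\<dots> < e" using K e by (simp add: field_simps)
    finally show ?thesis .
  qed
  ultimately show ?thesis by blast
qed

lemma max_abs_eigenvalue_ge_iff_rat:
  assumes N: "N \<ge> 1" and sym: "symmetric_on N A"
  shows "a \<le> max_abs_eigenvalue (mat_of N A) \<longleftrightarrow>
         (\<forall>n::nat. \<exists>w\<in>rat_unit_ball N. a - 1 / Suc n < \<bar>quad_form N A w\<bar>)"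
proof
  assume "a \<le> max_abs_eigenvalue (mat_of N A)"
  then obtain k where k: "eigenvalue (mat_of N A) k" "a \<le> \<bar>k\<bar>"
    using max_abs_eigenvalue_ge_iff[OF N sym] by blast
  obtain v where v: "sqnorm N v = 1" "quad_form N A v = k"
    using eigenvalue_mat_ofE[OF k(1)] .
  show "\<forall>n::nat. \<exists>w\<in>rat_unit_ball N. a - 1 / Suc n < \<bar>quad_form N A w\<bar>"
  proof
    fix n :: nat
    obtain w where "w \<in> rat_unit_ball N" "\<bar>quad_form N A v - quad_form N A w\<bar> < 1 / Suc n"
      using quad_form_approx_rat_unit_ball[of N v "1 / Suc n" A] v by auto
    with v k show "\<exists>w\<in>rat_unit_ball N. a - 1 / Suc n < \<bar>quad_form N A w\<bar>" by force
  qed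
next
  assume approx: "\<forall>n::nat. \<exists>w\<in>rat_unit_ball N. a - 1 / Suc n < \<bar>quad_form N A w\<bar>"
  have below: "a - 1 / Suc n < max_abs_eigenvalue (mat_of N A)" for n
  proof -
    obtain w where w: "w \<in> rat_unit_ball N" "a - 1 / Suc n < \<bar>quad_form N A w\<bar>"
      using approx by blast
    have "\<bar>quad_form N A w\<bar> \<le> max_abs_eigenvalue (mat_of N A) * sqnorm N w"
      by (rule abs_quad_form_le[OF N sym])
    also have "\<dots> \<le> max_abs_eigenvalue (mat_of N A)"
      using w(1) max_abs_eigenvalue_nonneg[OF N sym]
      by (intro mult_left_le) (auto simp: rat_unit_ball_def)
    finally show ?thesis using w(2) by linarith
  qed
  show "a \<le> max_abs_eigenvalue (mat_of N A)"
  proof (rule ccontr)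
    assume "\<not> a \<le> max_abs_eigenvalue (mat_of N A)"
    then obtain n where "inverse (real (Suc n)) < a - max_abs_eigenvalue (mat_of N A)"
      using reals_Archimedean[of "a - max_abs_eigenvalue (mat_of N A)"] by auto
    then show False using below[of n] by (simp add: inverse_eq_divide)
  qed
qed

lemma borel_measurable_max_abs_eigenvalue:
  assumes N: "N \<ge> 1" and sym: "\<And>\<omega>. symmetric_on N (A \<omega>)"
    and [measurable]: "\<And>i j. (\<lambda>\<omega>. A \<omega> i j) \<in> borel_measurable M"
  shows "(\<lambda>\<omega>. max_abs_eigenvalue (mat_of N (A \<omega>))) \<in> borel_measurable M"
  unfolding borel_measurable_iff_ge
proof
  fix a
  have "Measurable.pred M (\<lambda>\<omega>. a - 1 / Suc n < \<bar>quad_form N (A \<omega>) w\<bar>)" for n w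
    unfolding quad_form_def by measurable
  then have "Measurable.pred M (\<lambda>\<omega>. \<forall>n::nat. \<exists>w\<in>rat_unit_ball N. a - 1 / Suc n < \<bar>quad_form N (A \<omega>) w\<bar>)"
    unfolding pred_def
    by (intro pred_intros_countable[unfolded pred_def] sets.sets_Collect_countable_Ex' countable_rat_unit_ball)
  then show "{\<omega> \<in> space M. a \<le> max_abs_eigenvalue (mat_of N (A \<omega>))} \<in> sets M"
    by (simp add: pred_def max_abs_eigenvalue_ge_iff_rat[OF N sym])
qed

section \<open>The spherical partition function\<close>

lemma eucl_norm_eq_sqrt_sqnorm: "eucl_norm N z = sqrt (sqnorm N z)"
  by (simp add: eucl_norm_def sqnorm_def)

lemma borel_measurable_eucl_norm[measurable]:
  "eucl_norm N \<in> borel_measurable (PiM {..<N} (\<lambda>_. lborel))"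
  unfolding eucl_norm_def by measurable

abbreviation unit_ball :: "nat \<Rightarrow> (nat \<Rightarrow> real) set" where
  "unit_ball N \<equiv> {z \<in> space (PiM {..<N} (\<lambda>_. lborel)). eucl_norm N z \<le> 1}"

interpretation lborel_product: product_sigma_finite "\<lambda>_::nat. lborel :: real measure"
  by standard

lemma emeasure_unit_ball_finite: "emeasure (PiM {..<N} (\<lambda>_. lborel)) (unit_ball N) \<noteq> \<infinity>"
proof -
  have "unit_ball N \<subseteq> PiE {..<N} (\<lambda>_. {-1..1::real})"
  proof
    fix z assume z: "z \<in> unit_ball N"
    then have "\<bar>z i\<bar> \<le> 1" if "i < N" for i
      using abs_component_le_1[OF _ that, of z] by (simp add: eucl_norm_eq_sqrt_sqnorm)
    then show "z \<in> PiE {..<N} (\<lambda>_. {-1..1::real})"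
      using z by (auto simp: space_PiM PiE_iff abs_le_iff)
  qed
  then have "emeasure (PiM {..<N} (\<lambda>_. lborel)) (unit_ball N)
      \<le> emeasure (PiM {..<N} (\<lambda>_. lborel)) (PiE {..<N} (\<lambda>_. {-1..1::real}))"
    by (rule emeasure_mono) (simp add: sets_PiM_I_finite)
  also have "\<dots> = ennreal 2 ^ N"
    by (simp add: lborel_product.emeasure_PiM)
  also have "\<dots> = ennreal (2 ^ N)"
    by (rule ennreal_power) simp
  finally show ?thesis
    using ennreal_less_top[of "2 ^ N"] by (auto simp: top_unique)
qed

lemma emeasure_unit_ball_pos:
  assumes "N \<ge> 1"
  shows "emeasure (PiM {..<N} (\<lambda>_. lborel)) (unit_ball N) \<noteq> 0"
proof -
  have "PiE {..<N} (\<lambda>_. {0..1 / real N}) \<subseteq> unit_ball N"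
  proof
    fix z assume z: "z \<in> PiE {..<N} (\<lambda>_. {0..1 / real N})"
    have "sqnorm N z \<le> (\<Sum>i<N. (1 / real N)\<^sup>2)"
      unfolding sqnorm_def using z by (intro sum_mono power_mono) (auto simp: PiE_iff)
    also have "\<dots> \<le> 1" using assms by (simp add: power2_eq_square)
    finally show "z \<in> unit_ball N"
      using z by (auto simp: eucl_norm_eq_sqrt_sqnorm space_PiM PiE_iff)
  qed
  then have "emeasure (PiM {..<N} (\<lambda>_. lborel)) (PiE {..<N} (\<lambda>_. {0..1 / real N}))
      \<le> emeasure (PiM {..<N} (\<lambda>_. lborel)) (unit_ball N)"
    by (rule emeasure_mono) measurable
  then have "ennreal (1 / real N) ^ N \<le> emeasure (PiM {..<N} (\<lambda>_. lborel)) (unit_ball N)"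
    by (simp add: lborel_product.emeasure_PiM)
  moreover have "ennreal (1 / real N) ^ N \<noteq> 0" using assms by (simp add: ennreal_eq_0_iff)
  ultimately show ?thesis by (metis le_zero_eq)
qed

definition radial_projection :: "nat \<Rightarrow> real \<Rightarrow> (nat \<Rightarrow> real) \<Rightarrow> nat \<Rightarrow> real" where
  "radial_projection N r z = restrict (\<lambda>i. r * z i / eucl_norm N z) {..<N}"

lemma measurable_radial_projection:
  "radial_projection N r \<in> measurable (uniform_measure (PiM {..<N} (\<lambda>_. lborel)) (unit_ball N))
     (PiM {..<N} (\<lambda>_. borel))"
  unfolding radial_projection_def
  by (subst measurable_cong_sets[OF sets_uniform_measure refl]) measurable

lemma sigma_RN_eq_distr:
  "sigma_RN R N = distr (uniform_measure (PiM {..<N} (\<lambda>_. lborel)) (unit_ball N))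
     (PiM {..<N} (\<lambda>_. borel)) (radial_projection N (R * sqrt (real N)))"
  unfolding sigma_RN_def unif_sphere_def radial_projection_def ..

lemma prob_space_sigma_RN:
  assumes "N \<ge> 1"
  shows "prob_space (sigma_RN R N)"
  unfolding sigma_RN_eq_distr
  by (intro prob_space.prob_space_distr prob_space_uniform_measure measurable_radial_projection
      emeasure_unit_ball_pos[OF assms] emeasure_unit_ball_finite)

lemma sets_sigma_RN: "sets (sigma_RN R N) = sets (PiM {..<N} (\<lambda>_. borel))"
  by (simp add: sigma_RN_eq_distr)

text \<open>The origin, a null set, is sent to the origin (\<open>x / 0 = 0\<close>), so the bound is not an
  equality.\<close>

lemma sqnorm_radial_projection_le: "sqnorm N (radial_projection N r z) \<le> r\<^sup>2"
proof (cases "sqnorm N z = 0")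
  case True
  then show ?thesis by (simp add: radial_projection_def eucl_norm_eq_sqrt_sqnorm sqnorm_def)
next
  case False
  then have "sqnorm N z > 0" using sqnorm_nonneg[of N z] by simp
  have "sqnorm N (radial_projection N r z) = sqnorm N (\<lambda>i. (r / eucl_norm N z) * z i)"
    by (rule sqnorm_cong) (simp add: radial_projection_def)
  also have "\<dots> = r\<^sup>2"
    unfolding sqnorm_scale
    using \<open>sqnorm N z > 0\<close> by (simp add: eucl_norm_eq_sqrt_sqnorm power_divide)
  finally show ?thesis by simp
qed

lemma hamiltonian_eq_quad_form:
  "hamiltonian N J z = - quad_form N (\<lambda>i j. J i j / sqrt (real N)) z"
  unfolding hamiltonian_def quad_form_def by (simp add: sum_distrib_left algebra_simps sum_negf)

lemma Z_sf_bounds: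
  assumes N: "N \<ge> 1" and "\<beta> \<ge> 0" and "m \<ge> 0"
    and m: "\<And>z. \<bar>quad_form N (\<lambda>i j. J i j / sqrt (real N)) z\<bar> \<le> m * sqnorm N z"
  shows "exp (- (\<beta> * R\<^sup>2 * real N * m)) \<le> Z_sf N \<beta> R J"
    and "Z_sf N \<beta> R J \<le> exp (\<beta> * R\<^sup>2 * real N * m)"
proof -
  let ?U = "uniform_measure (PiM {..<N} (\<lambda>_. lborel)) (unit_ball N)"
  let ?T = "radial_projection N (R * sqrt (real N))"
  let ?f = "\<lambda>w. exp (- \<beta> * hamiltonian N J w)"
  let ?B = "\<beta> * R\<^sup>2 * real N * m"
  interpret U: prob_space ?U
    by (intro prob_space_uniform_measure emeasure_unit_ball_pos[OF N] emeasure_unit_ball_finite)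
  have f_meas: "?f \<in> borel_measurable (PiM {..<N} (\<lambda>_. borel))"
    unfolding hamiltonian_def by measurable
  have Z_eq: "Z_sf N \<beta> R J = (\<integral>z. ?f (?T z) \<partial>?U)"
    unfolding Z_sf_def sigma_RN_eq_distr by (rule integral_distr[OF measurable_radial_projection f_meas])
  have exponent: "\<bar>\<beta> * quad_form N (\<lambda>i j. J i j / sqrt (real N)) (?T z)\<bar> \<le> ?B" for z
  proof -
    have "\<bar>quad_form N (\<lambda>i j. J i j / sqrt (real N)) (?T z)\<bar> \<le> m * (R * sqrt (real N))\<^sup>2"
      using m[of "?T z"] mult_left_mono[OF sqnorm_radial_projection_le[of N "R * sqrt (real N)" z] \<open>m \<ge> 0\<close>] by linarith
    then show ?thesis
      using \<open>\<beta> \<ge> 0\<close> by (simp add: abs_mult power_mult_distrib mult_left_mono mult_ac)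
  qed
  have bounds: "exp (- ?B) \<le> ?f (?T z)" "?f (?T z) \<le> exp ?B" for z
    using exponent[of z] by (simp_all add: hamiltonian_eq_quad_form abs_le_iff)
  have "integrable ?U (\<lambda>z. ?f (?T z))"
    using measurable_comp[OF measurable_radial_projection f_meas] bounds(2)
    by (intro U.integrable_const_bound[where B = "exp ?B"]) (auto simp: comp_def)
  then show "exp (- ?B) \<le> Z_sf N \<beta> R J" "Z_sf N \<beta> R J \<le> exp ?B"
    unfolding Z_eq using U.integral_ge_const U.integral_le_const bounds by auto
qed

lemma borel_measurable_Z_sf:
  assumes N: "N \<ge> 1" and [measurable]: "\<And>i j. (\<lambda>\<omega>. J \<omega> i j) \<in> borel_measurable M"
  shows "(\<lambda>\<omega>. Z_sf N \<beta> R (J \<omega>)) \<in> borel_measurable M"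
proof -
  interpret S: prob_space "sigma_RN R N" by (rule prob_space_sigma_RN[OF N])
  have "(\<lambda>(\<omega>, w). exp (- \<beta> * hamiltonian N (J \<omega>) w))
      \<in> borel_measurable (M \<Otimes>\<^sub>M PiM {..<N} (\<lambda>_. borel))"
    unfolding hamiltonian_def by measurable
  then have "(\<lambda>(\<omega>, w). exp (- \<beta> * hamiltonian N (J \<omega>) w)) \<in> borel_measurable (M \<Otimes>\<^sub>M sigma_RN R N)"
    by (subst measurable_cong_sets[OF sets_pair_measure_cong[OF refl sets_sigma_RN] refl])
  then show ?thesis unfolding Z_sf_def by (rule S.borel_measurable_lebesgue_integral)
qed

section \<open>Integrating against a Gaussian tail\<close>

lemma linear_minus_quadratic_le:
  fixes c a t :: real
  assumes "t > 0"
  shows "c * a - t * a\<^sup>2 \<le> c\<^sup>2 / (4 * t)"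
proof -
  have "0 \<le> (c - 2 * t * a)\<^sup>2 / (4 * t)" using assms by simp
  also have "\<dots> = c\<^sup>2 / (4 * t) - (c * a - t * a\<^sup>2)"
    using assms by (simp add: field_simps power2_eq_square)
  finally show ?thesis by simp
qed

text \<open>Trading a fraction \<open>\<epsilon>\<close> of the Gaussian decay for geometric decay in the shell index \<open>k\<close>.\<close>

lemma shell_exponent_le:
  fixes c a0 \<delta> \<epsilon> \<theta> :: real and N k :: nat
  assumes "N \<ge> 1" "a0 > 0" "\<delta> > 0" "0 < \<epsilon>" "\<epsilon> < \<theta>"
  shows "c * N * (a0 + (real k + 1) * \<delta>) - \<theta> * (a0 + k * \<delta>)\<^sup>2 * N
    \<le> N * (c * \<delta> + c\<^sup>2 / (4 * (\<theta> - \<epsilon>))) - \<epsilon> * a0 * \<delta> * k"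
proof -
  define a where "a = a0 + k * \<delta>"
  have "a0 * \<delta> * k \<le> a0 * a" using assms by (simp add: a_def)
  also have "\<dots> \<le> a\<^sup>2" using assms by (simp add: a_def power2_eq_square mult_right_mono)
  also have "\<dots> = 1 * a\<^sup>2" by simp
  also have "\<dots> \<le> N * a\<^sup>2" using assms by (intro mult_right_mono) auto
  finally have decay: "\<epsilon> * a0 * \<delta> * k \<le> \<epsilon> * (N * a\<^sup>2)"
    using assms by (simp add: mult.assoc)
  have "N * (c * a - (\<theta> - \<epsilon>) * a\<^sup>2) \<le> N * (c\<^sup>2 / (4 * (\<theta> - \<epsilon>)))"
    using assms by (intro mult_left_mono linear_minus_quadratic_le) auto
  moreover have "a0 + (real k + 1) * \<delta> = a + \<delta>" by (simp add: a_def algebra_simps)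
  ultimately show ?thesis
    using decay unfolding a_def[symmetric] by (simp add: algebra_simps)
qed

lemma shell_term_le:
  fixes c a0 \<delta> \<epsilon> \<theta> C1 :: real and N k :: nat
  assumes "N \<ge> 1" "a0 > 0" "\<delta> > 0" "0 < \<epsilon>" "\<epsilon> < \<theta>" "C1 \<ge> 0"
  shows "exp (c * N * (a0 + (real k + 1) * \<delta>)) * (C1 * exp (- \<theta> * (a0 + k * \<delta>)\<^sup>2 * N))
     \<le> C1 * exp (N * (c * \<delta> + c\<^sup>2 / (4 * (\<theta> - \<epsilon>)))) * exp (- \<epsilon> * a0 * \<delta>) ^ k"
proof -
  have "exp (c * N * (a0 + (real k + 1) * \<delta>) - \<theta> * (a0 + k * \<delta>)\<^sup>2 * N)
     \<le> exp (N * (c * \<delta> + c\<^sup>2 / (4 * (\<theta> - \<epsilon>))) - \<epsilon> * a0 * \<delta> * k)"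
    using shell_exponent_le[OF assms(1-5)] by simp
  then show ?thesis
    using assms(6) by (simp add: exp_diff exp_minus exp_of_nat_mult[symmetric] field_simps mult_left_mono)
qed

lemma shell_index_exists:
  fixes a0 \<delta> x :: real
  assumes "\<delta> > 0" "a0 \<le> x"
  obtains k :: nat where "a0 + k * \<delta> \<le> x" "x < a0 + (real k + 1) * \<delta>"
proof
  define k where "k = nat \<lfloor>(x - a0) / \<delta>\<rfloor>"
  have k: "real k = of_int \<lfloor>(x - a0) / \<delta>\<rfloor>"
    unfolding k_def using assms by simp
  have floor: "of_int \<lfloor>(x - a0) / \<delta>\<rfloor> \<le> (x - a0) / \<delta>"
    "(x - a0) / \<delta> < of_int \<lfloor>(x - a0) / \<delta>\<rfloor> + 1"
    by linarith+
  show "a0 + k * \<delta> \<le> x"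
    using floor(1) assms unfolding k by (simp add: le_divide_eq algebra_simps)
  show "x < a0 + (real k + 1) * \<delta>"
    using floor(2) assms by (simp add: k divide_less_eq algebra_simps)
qed

lemma exp_le_shell_sum:
  fixes \<kappa> a0 \<delta> y :: real
  assumes "\<kappa> \<ge> 0" "\<delta> > 0"
  shows "ennreal (exp (\<kappa> * y)) \<le> ennreal (exp (\<kappa> * a0))
    + (\<Sum>k. ennreal (exp (\<kappa> * (a0 + (real k + 1) * \<delta>))) * indicator {a0 + k * \<delta>..} y)"
proof (cases "y < a0")
  case True
  then have "exp (\<kappa> * y) \<le> exp (\<kappa> * a0)"
    using assms by (auto intro: mult_left_mono)
  then show ?thesis by (intro add_increasing2 ennreal_leI) simp_all
next
  case False
  then obtain k where k: "a0 + k * \<delta> \<le> y" "y < a0 + (real k + 1) * \<delta>"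
    using shell_index_exists[of \<delta> a0 y] assms by auto
  have "exp (\<kappa> * y) \<le> exp (\<kappa> * (a0 + (real k + 1) * \<delta>))"
    using k(2) assms by (intro exp_mono mult_left_mono) auto
  then have "ennreal (exp (\<kappa> * y))
      \<le> ennreal (exp (\<kappa> * (a0 + (real k + 1) * \<delta>))) * indicator {a0 + k * \<delta>..} y"
    using k(1) by (simp add: ennreal_leI)
  also have "\<dots> \<le> (\<Sum>j. ennreal (exp (\<kappa> * (a0 + (real j + 1) * \<delta>))) * indicator {a0 + j * \<delta>..} y)"
    using sum_le_suminf[of f "{k}" for f :: "nat \<Rightarrow> ennreal"] by simp
  finally show ?thesis by (rule add_increasing[rotated]) simp
qed

text \<open>Layer-cake bound: split \<open>\<Omega>\<close> according to the shell \<open>a0 + k \<delta> \<le> m < a0 + (k + 1) \<delta>\<close>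
  containing \<open>m\<close>; on the \<open>k\<close>-th shell \<open>Z \<le> exp (c N (a0 + (k + 1) \<delta>))\<close>, while the tail
  hypothesis makes the shells' probabilities decay fast enough to sum to a geometric series.\<close>

lemma nn_integral_le_of_gaussian_tail:
  fixes M :: "'w measure" and Z m :: "'w \<Rightarrow> real" and N :: nat
    and c lb a0 \<delta> \<epsilon> \<theta> C1 :: real
  assumes "prob_space M"
    and Z_le: "\<And>\<omega>. \<omega> \<in> space M \<Longrightarrow> Z \<omega> \<le> exp (c * N * m \<omega>)"
    and m_meas: "m \<in> borel_measurable M"
    and tail: "\<And>a. a > lb \<Longrightarrow> measure M {\<omega> \<in> space M. a \<le> m \<omega>} \<le> C1 * exp (- \<theta> * a\<^sup>2 * N)"
    and "N \<ge> 1" "c > 0" "lb \<ge> 0" "a0 > lb" "\<delta> > 0" "0 < \<epsilon>" "\<epsilon> < \<theta>" "C1 \<ge> 0"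
  shows "(\<integral>\<^sup>+\<omega>. Z \<omega> \<partial>M) \<le> ennreal (exp (c * N * a0)
      + C1 * exp (N * (c * \<delta> + c\<^sup>2 / (4 * (\<theta> - \<epsilon>)))) / (1 - exp (- \<epsilon> * a0 * \<delta>)))"
proof -
  interpret prob_space M by fact
  define shell_bound where "shell_bound = (\<lambda>k::nat. exp (c * N * (a0 + (real k + 1) * \<delta>)))"
  define E where "E = (\<lambda>k::nat. {\<omega> \<in> space M. a0 + k * \<delta> \<le> m \<omega>})"
  define r where "r = exp (- \<epsilon> * a0 * \<delta>)"
  define K where "K = C1 * exp (N * (c * \<delta> + c\<^sup>2 / (4 * (\<theta> - \<epsilon>))))"
  have "a0 > 0" using assms by linarith
  then have r: "0 < r" "r < 1" unfolding r_def using assms by auto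
  have "K \<ge> 0" unfolding K_def using assms by simp
  have E_sets: "E k \<in> sets M" for k
    unfolding E_def using m_meas by measurable
  have pointwise: "ennreal (Z \<omega>) \<le> ennreal (exp (c * N * a0)) + (\<Sum>k. ennreal (shell_bound k) * indicator (E k) \<omega>)"
    if \<omega>: "\<omega> \<in> space M" for \<omega>
  proof -
    have "ennreal (Z \<omega>) \<le> ennreal (exp (c * N * m \<omega>))"
      using Z_le[OF \<omega>] by (rule ennreal_leI)
    also have "\<dots> \<le> ennreal (exp (c * N * a0))
        + (\<Sum>k. ennreal (shell_bound k) * indicator {a0 + k * \<delta>..} (m \<omega>))"
      unfolding shell_bound_def using assms by (intro exp_le_shell_sum) auto
    also have "\<dots> = ennreal (exp (c * N * a0)) + (\<Sum>k. ennreal (shell_bound k) * indicator (E k) \<omega>)"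
      using \<omega> by (simp add: E_def indicator_def)
    finally show ?thesis .
  qed
  have "(\<integral>\<^sup>+\<omega>. Z \<omega> \<partial>M) \<le> (\<integral>\<^sup>+\<omega>. ennreal (exp (c * N * a0)) + (\<Sum>k. ennreal (shell_bound k) * indicator (E k) \<omega>) \<partial>M)"
    by (intro nn_integral_mono pointwise)
  also have "\<dots> = ennreal (exp (c * N * a0)) + (\<Sum>k. ennreal (shell_bound k) * emeasure M (E k))"
    using E_sets
    by (simp add: nn_integral_add nn_integral_suminf nn_integral_cmult_indicator emeasure_space_1)
  also have "(\<Sum>k. ennreal (shell_bound k) * emeasure M (E k)) \<le> (\<Sum>k. ennreal (K * r ^ k))"
  proof (intro suminf_le allI)
    fix k :: nat
    have "measure M (E k) \<le> C1 * exp (- \<theta> * (a0 + k * \<delta>)\<^sup>2 * N)"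
      unfolding E_def using assms by (intro tail) (auto intro: less_le_trans)
    then have "shell_bound k * measure M (E k) \<le> shell_bound k * (C1 * exp (- \<theta> * (a0 + k * \<delta>)\<^sup>2 * N))"
      by (simp add: shell_bound_def)
    also have "\<dots> \<le> K * r ^ k"
      unfolding shell_bound_def K_def r_def using assms \<open>a0 > 0\<close> by (intro shell_term_le)
    finally show "ennreal (shell_bound k) * emeasure M (E k) \<le> ennreal (K * r ^ k)"
      by (simp add: emeasure_eq_measure ennreal_mult''[symmetric] shell_bound_def ennreal_leI)
  qed auto
  also have "(\<Sum>k. ennreal (K * r ^ k)) = ennreal (K / (1 - r))"
    using r \<open>K \<ge> 0\<close>
    by (subst suminf_ennreal2) (auto simp: suminf_mult summable_geometric suminf_geometric)
  finally show ?thesis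
    using r \<open>K \<ge> 0\<close> unfolding K_def r_def by (simp add: ennreal_plus)
qed

lemma integral_le_of_gaussian_tail:
  fixes M :: "'w measure" and Z m :: "'w \<Rightarrow> real" and N :: nat
    and c lb a0 \<delta> \<epsilon> \<theta> C1 :: real
  assumes "prob_space M" and Z_meas: "Z \<in> borel_measurable M"
    and Z_bounds: "\<And>\<omega>. \<omega> \<in> space M \<Longrightarrow> 0 \<le> Z \<omega> \<and> Z \<omega> \<le> exp (c * N * m \<omega>)"
    and "m \<in> borel_measurable M"
    and "\<And>a. a > lb \<Longrightarrow> measure M {\<omega> \<in> space M. a \<le> m \<omega>} \<le> C1 * exp (- \<theta> * a\<^sup>2 * N)"
    and "N \<ge> 1" "c > 0" "lb \<ge> 0" "a0 > lb" "\<delta> > 0" "0 < \<epsilon>" "\<epsilon> < \<theta>" "C1 \<ge> 0"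
  shows "integrable M Z"
    and "(\<integral>\<omega>. Z \<omega> \<partial>M) \<le> exp (c * N * a0)
      + C1 * exp (N * (c * \<delta> + c\<^sup>2 / (4 * (\<theta> - \<epsilon>)))) / (1 - exp (- \<epsilon> * a0 * \<delta>))"
proof -
  let ?B = "exp (c * N * a0) + C1 * exp (N * (c * \<delta> + c\<^sup>2 / (4 * (\<theta> - \<epsilon>)))) / (1 - exp (- \<epsilon> * a0 * \<delta>))"
  have nn_le: "(\<integral>\<^sup>+\<omega>. Z \<omega> \<partial>M) \<le> ennreal ?B"
    using Z_bounds assms by (intro nn_integral_le_of_gaussian_tail[where m = m]) auto
  have "exp (- \<epsilon> * a0 * \<delta>) < 1" using assms by auto
  then have "0 \<le> ?B" using assms by (intro add_nonneg_nonneg divide_nonneg_pos) auto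
  show "integrable M Z"
    using Z_bounds nn_le by (intro integrableI_nonneg[OF Z_meas]) (auto intro: AE_I2 le_less_trans)
  have "(\<integral>\<omega>. Z \<omega> \<partial>M) = enn2real (\<integral>\<^sup>+\<omega>. Z \<omega> \<partial>M)"
    using Z_bounds by (intro integral_eq_nn_integral[OF Z_meas] AE_I2) simp
  also have "\<dots> \<le> enn2real (ennreal ?B)"
    by (rule enn2real_mono[OF nn_le]) simp
  finally show "(\<integral>\<omega>. Z \<omega> \<partial>M) \<le> ?B"
    using \<open>0 \<le> ?B\<close> by simp
qed

section \<open>The model at a fixed size\<close>

lemma (in prob_space) integral_ln_le_ln_integral:
  fixes Z :: "'a \<Rightarrow> real"
  assumes "integrable M Z" "integrable M (\<lambda>x. ln (Z x))" "\<And>x. x \<in> space M \<Longrightarrow> 0 < Z x"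
  shows "(\<integral>x. ln (Z x) \<partial>M) \<le> ln (\<integral>x. Z x \<partial>M)"
proof -
  have "- ln (\<integral>x. Z x \<partial>M) \<le> (\<integral>x. - ln (Z x) \<partial>M)"
  proof (rule jensens_inequality[where q = "\<lambda>x. - ln x" and I = "{0<..}" and a = 0 and b = 0])
    show "convex_on {0<..} (\<lambda>x. - ln x)"
      using ln_concave by (simp add: concave_on_def)
  qed (use assms in auto)
  then show ?thesis by simp
qed

lemma scaled_mat_eq_mat_of: "scaled_mat N J = mat_of N (\<lambda>i j. J i j / sqrt (real N))"
  by (simp add: scaled_mat_def mat_of_def)

locale spherical_model_of_size = prob_space M for M :: "'w measure" +
  fixes N :: nat and J :: "'w \<Rightarrow> nat \<Rightarrow> nat \<Rightarrow> real" and \<beta> R lb C1 \<theta> :: real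
  assumes N: "N \<ge> 1"
    and J_meas[measurable]: "\<And>i j. (\<lambda>\<omega>. J \<omega> i j) \<in> borel_measurable M"
    and J_symm: "\<And>\<omega> i j. J \<omega> i j = J \<omega> j i"
    and J_integrable: "\<And>i j. i < N \<Longrightarrow> j < N \<Longrightarrow> integrable M (\<lambda>\<omega>. J \<omega> i j)"
    and eigenvalue_tail: "\<And>a. a > lb \<Longrightarrow>
      measure M {\<omega> \<in> space M. \<exists>ev. eigenvalue (scaled_mat N (J \<omega>)) ev \<and> \<bar>ev\<bar> \<ge> a}
        \<le> C1 * exp (- \<theta> * a\<^sup>2 * real N)"
    and pos: "\<beta> > 0" "R > 0" "lb > 0" "C1 > 0" "\<theta> > 0"
begin

abbreviation spec_radius :: "'w \<Rightarrow> real" where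
  "spec_radius \<omega> \<equiv> max_abs_eigenvalue (mat_of N (\<lambda>i j. J \<omega> i j / sqrt (real N)))"

abbreviation Z :: "'w \<Rightarrow> real" where
  "Z \<omega> \<equiv> Z_sf N \<beta> R (J \<omega>)"

lemma symmetric_on_scaled: "symmetric_on N (\<lambda>i j. J \<omega> i j / sqrt (real N))"
  by (simp add: symmetric_on_def J_symm)

lemma spec_radius_nonneg: "0 \<le> spec_radius \<omega>"
  by (rule max_abs_eigenvalue_nonneg[OF N symmetric_on_scaled])

lemma Z_bounds:
  shows Z_ge: "exp (- (\<beta> * R\<^sup>2 * N * spec_radius \<omega>)) \<le> Z \<omega>"
    and Z_le: "Z \<omega> \<le> exp (\<beta> * R\<^sup>2 * N * spec_radius \<omega>)"
  using Z_sf_bounds[OF N less_imp_le[OF pos(1)] spec_radius_nonneg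
      abs_quad_form_le[OF N symmetric_on_scaled]] .

lemma Z_pos: "0 < Z \<omega>"
  using Z_ge[of \<omega>] by (meson exp_gt_zero less_le_trans)

lemma borel_measurable_Z: "Z \<in> borel_measurable M"
  by (rule borel_measurable_Z_sf[OF N]) (rule J_meas)

lemma borel_measurable_spec_radius: "spec_radius \<in> borel_measurable M"
  by (rule borel_measurable_max_abs_eigenvalue[OF N symmetric_on_scaled]) measurable

lemma spec_radius_tail:
  assumes "a > lb"
  shows "measure M {\<omega> \<in> space M. a \<le> spec_radius \<omega>} \<le> C1 * exp (- \<theta> * a\<^sup>2 * N)"
  using eigenvalue_tail[OF assms]
  by (simp add: scaled_mat_eq_mat_of max_abs_eigenvalue_ge_iff[OF N symmetric_on_scaled])

lemma
  assumes "a0 > lb" "\<delta> > 0" "0 < \<epsilon>" "\<epsilon> < \<theta>"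
  shows integrable_Z: "integrable M Z"
    and integral_Z_le: "(\<integral>\<omega>. Z \<omega> \<partial>M) \<le> exp (\<beta> * R\<^sup>2 * N * a0)
      + C1 * exp (N * (\<beta> * R\<^sup>2 * \<delta> + (\<beta> * R\<^sup>2)\<^sup>2 / (4 * (\<theta> - \<epsilon>)))) / (1 - exp (- \<epsilon> * a0 * \<delta>))"
proof -
  have "\<And>\<omega>. \<omega> \<in> space M \<Longrightarrow> 0 \<le> Z \<omega> \<and> Z \<omega> \<le> exp (\<beta> * R\<^sup>2 * N * spec_radius \<omega>)"
    using Z_pos Z_le less_imp_le by blast
  moreover have "\<beta> * R\<^sup>2 > 0" "lb \<ge> 0" "C1 \<ge> 0" using pos by auto
  ultimately show "integrable M Z" "(\<integral>\<omega>. Z \<omega> \<partial>M) \<le> exp (\<beta> * R\<^sup>2 * N * a0)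
      + C1 * exp (N * (\<beta> * R\<^sup>2 * \<delta> + (\<beta> * R\<^sup>2)\<^sup>2 / (4 * (\<theta> - \<epsilon>)))) / (1 - exp (- \<epsilon> * a0 * \<delta>))"
    using integral_le_of_gaussian_tail[OF prob_space_axioms borel_measurable_Z
      _ borel_measurable_spec_radius spec_radius_tail N _ _ assms]
    by blast+
qed

lemma abs_ln_Z_le: "\<bar>ln (Z \<omega>)\<bar> \<le> \<beta> * R\<^sup>2 * N * spec_radius \<omega>"
proof -
  have "ln (Z \<omega>) \<le> ln (exp (\<beta> * R\<^sup>2 * N * spec_radius \<omega>))"
    using Z_le Z_pos by (subst ln_le_cancel_iff) auto
  moreover have "- (\<beta> * R\<^sup>2 * N * spec_radius \<omega>) \<le> ln (Z \<omega>)"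
    using Z_ge Z_pos by (subst ln_ge_iff) auto
  ultimately show ?thesis by (simp add: abs_le_iff)
qed

lemma integrable_ln_Z: "integrable M (\<lambda>\<omega>. ln (Z \<omega>))"
proof (rule Bochner_Integration.integrable_bound)
  define B where "B \<omega> = \<beta> * R\<^sup>2 * N * (\<Sum>i<N. \<Sum>j<N. \<bar>J \<omega> i j / sqrt (real N)\<bar>)" for \<omega>
  show "integrable M B"
    unfolding B_def by (intro integrable_mult_right integrable_sum)
       (auto intro!: integrable_divide integrable_abs J_integrable)
  show "(\<lambda>\<omega>. ln (Z \<omega>)) \<in> borel_measurable M"
    using borel_measurable_Z by measurable
  have spec_le: "\<beta> * R\<^sup>2 * N * spec_radius \<omega> \<le> B \<omega>" for \<omega>
    unfolding B_def using max_abs_eigenvalue_le_sum_abs[OF N symmetric_on_scaled] pos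
    by (intro mult_left_mono) auto
  have "\<bar>ln (Z \<omega>)\<bar> \<le> \<bar>B \<omega>\<bar>" for \<omega>
    using abs_ln_Z_le[of \<omega>] spec_le[of \<omega>] abs_ge_self[of "B \<omega>"] by linarith
  then show "AE \<omega> in M. norm (ln (Z \<omega>)) \<le> norm (B \<omega>)" by simp
qed

lemma integral_ln_Z_le: "(\<integral>\<omega>. ln (Z \<omega>) \<partial>M) \<le> ln (\<integral>\<omega>. Z \<omega> \<partial>M)"
  using integrable_Z[of "lb + 1" 1 "\<theta> / 2"] pos
  by (intro integral_ln_le_ln_integral integrable_ln_Z Z_pos) auto

lemma ln_integral_Z_le:
  assumes "a0 > lb" "\<delta> > 0" "0 < \<epsilon>" "\<epsilon> < \<theta>"
  shows "ln (\<integral>\<omega>. Z \<omega> \<partial>M) \<le> ln (1 + C1 / (1 - exp (- \<epsilon> * a0 * \<delta>)))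
    + N * max (\<beta> * R\<^sup>2 * a0) (\<beta> * R\<^sup>2 * \<delta> + (\<beta> * R\<^sup>2)\<^sup>2 / (4 * (\<theta> - \<epsilon>)))"
proof -
  define rate where "rate = max (\<beta> * R\<^sup>2 * a0) (\<beta> * R\<^sup>2 * \<delta> + (\<beta> * R\<^sup>2)\<^sup>2 / (4 * (\<theta> - \<epsilon>)))"
  define r where "r = exp (- \<epsilon> * a0 * \<delta>)"
  have r: "0 < r" "r < 1" unfolding r_def using assms pos by auto
  have "N * (\<beta> * R\<^sup>2 * a0) \<le> N * rate"
    "N * (\<beta> * R\<^sup>2 * \<delta> + (\<beta> * R\<^sup>2)\<^sup>2 / (4 * (\<theta> - \<epsilon>))) \<le> N * rate"
    unfolding rate_def by (intro mult_left_mono; simp)+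
  then have "exp (\<beta> * R\<^sup>2 * N * a0) \<le> exp (N * rate)"
    "exp (N * (\<beta> * R\<^sup>2 * \<delta> + (\<beta> * R\<^sup>2)\<^sup>2 / (4 * (\<theta> - \<epsilon>)))) \<le> exp (N * rate)"
    by (simp_all add: mult_ac)
  then have "(\<integral>\<omega>. Z \<omega> \<partial>M) \<le> exp (N * rate) + C1 * exp (N * rate) / (1 - r)"
    using integral_Z_le[OF assms] r pos unfolding r_def[symmetric]
    by (elim order_trans add_mono) (auto intro!: divide_right_mono mult_left_mono)
  also have "\<dots> = (1 + C1 / (1 - r)) * exp (N * rate)" by (simp add: algebra_simps)
  finally have "ln (\<integral>\<omega>. Z \<omega> \<partial>M) \<le> ln ((1 + C1 / (1 - r)) * exp (N * rate))"
    using expectation_greater[OF integrable_Z[OF assms], of 0] Z_pos by (subst ln_le_cancel_iff) auto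
  also have "\<dots> = ln (1 + C1 / (1 - r)) + N * rate"
  proof -
    have "0 < 1 + C1 / (1 - r)" using r pos by (intro add_pos_nonneg divide_nonneg_pos) auto
    then show ?thesis by (simp add: ln_mult)
  qed
  finally show ?thesis unfolding rate_def r_def .
qed

end

section \<open>The large-\<open>N\<close> limit\<close>

lemma limsup_normalized_le:
  fixes f :: "nat \<Rightarrow> real" and T :: real
  assumes "\<And>\<eta>. \<eta> > 0 \<Longrightarrow> \<exists>L. \<forall>\<^sub>F N in sequentially. f N \<le> L + real N * (T + \<eta>)"
  shows "limsup (\<lambda>N. ereal (1 / real N * f N)) \<le> ereal T"
proof (rule ereal_le_epsilon2)
  fix \<eta> :: real
  assume "0 < \<eta>"
  then obtain L where L: "\<forall>\<^sub>F N in sequentially. f N \<le> L + real N * (T + \<eta>)"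
    using assms by blast
  have "\<forall>\<^sub>F N in sequentially. ereal (1 / real N * f N) \<le> ereal (T + \<eta> + L * (1 / real N))"
    using L eventually_gt_at_top[of 0]
  proof eventually_elim
    case (elim N)
    then have "1 / real N * f N \<le> 1 / real N * (L + real N * (T + \<eta>))"
      by (intro mult_left_mono) auto
    with elim show ?case by (simp add: field_simps)
  qed
  then have "limsup (\<lambda>N. ereal (1 / real N * f N)) \<le> limsup (\<lambda>N. ereal (T + \<eta> + L * (1 / real N)))"
    by (rule Limsup_mono)
  also have "\<dots> = ereal (T + \<eta>)"
  proof (rule lim_imp_Limsup)
    have "(\<lambda>N. T + \<eta> + L * (1 / real N)) \<longlonglongrightarrow> T + \<eta> + L * 0"
      by (intro tendsto_intros lim_1_over_n)
    then show "(\<lambda>N. ereal (T + \<eta> + L * (1 / real N))) \<longlonglongrightarrow> ereal (T + \<eta>)"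
      by (simp add: lim_ereal)
  qed simp
  finally show "limsup (\<lambda>N. ereal (1 / real N * f N)) \<le> ereal T + ereal \<eta>" by simp
qed

lemma shell_parameters_exist:
  fixes c \<theta> lb \<eta> :: real
  assumes c: "c > 0" and \<theta>: "\<theta> > 0" and \<eta>: "\<eta> > 0"
  obtains a0 \<delta> \<epsilon> where "a0 > lb" "\<delta> > 0" "0 < \<epsilon>" "\<epsilon> < \<theta>"
    "max (c * a0) (c * \<delta> + c\<^sup>2 / (4 * (\<theta> - \<epsilon>))) = max (c * lb) (c\<^sup>2 / (4 * \<theta>)) + \<eta>"
proof
  define u where "u = c\<^sup>2 / (4 * \<theta>)"
  have u: "u > 0" "c\<^sup>2 = 4 * u * \<theta>" unfolding u_def using c \<theta> by auto
  show "lb + \<eta> / c > lb" "\<eta> / (2 * c) > 0" using c \<eta> by auto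
  show "\<theta> - c\<^sup>2 / (4 * u + 2 * \<eta>) < \<theta>" using c u \<eta> \<theta> by simp
  have "c\<^sup>2 < \<theta> * (4 * u + 2 * \<eta>)" using u \<theta> \<eta> by (simp add: algebra_simps)
  then show "0 < \<theta> - c\<^sup>2 / (4 * u + 2 * \<eta>)" using u \<eta> by (simp add: divide_less_eq)
  have "c * (lb + \<eta> / c) = c * lb + \<eta>" using c by (simp add: algebra_simps)
  moreover have "c * (\<eta> / (2 * c)) + c\<^sup>2 / (4 * (\<theta> - (\<theta> - c\<^sup>2 / (4 * u + 2 * \<eta>)))) = u + \<eta>"
    using c u \<eta> \<theta> by (simp add: field_simps)
  ultimately show "max (c * (lb + \<eta> / c)) (c * (\<eta> / (2 * c))
      + c\<^sup>2 / (4 * (\<theta> - (\<theta> - c\<^sup>2 / (4 * u + 2 * \<eta>))))) = max (c * lb) (c\<^sup>2 / (4 * \<theta>)) + \<eta>"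
    by (simp add: u_def)
qed

lemma limsup_integral_ln_Z_sf_le:
  assumes model: "\<And>N. N \<ge> 1 \<Longrightarrow> spherical_model_of_size M N (J N) \<beta> R lb C1 \<theta>"
  shows "limsup (\<lambda>N. ereal (1 / real N * (\<integral>\<omega>. ln (Z_sf N \<beta> R (J N \<omega>)) \<partial>M)))
    \<le> limsup (\<lambda>N. ereal (1 / real N * ln (\<integral>\<omega>. Z_sf N \<beta> R (J N \<omega>) \<partial>M)))"
proof (rule Limsup_mono)
  show "\<forall>\<^sub>F N in sequentially. ereal (1 / real N * (\<integral>\<omega>. ln (Z_sf N \<beta> R (J N \<omega>)) \<partial>M))
      \<le> ereal (1 / real N * ln (\<integral>\<omega>. Z_sf N \<beta> R (J N \<omega>) \<partial>M))"
    using eventually_ge_at_top[of 1]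
    by eventually_elim (simp add: divide_right_mono spherical_model_of_size.integral_ln_Z_le[OF model])
qed

lemma limsup_ln_integral_Z_sf_le:
  assumes model: "\<And>N. N \<ge> 1 \<Longrightarrow> spherical_model_of_size M N (J N) \<beta> R lb C1 \<theta>"
  shows "limsup (\<lambda>N. ereal (1 / real N * ln (\<integral>\<omega>. Z_sf N \<beta> R (J N \<omega>) \<partial>M)))
    \<le> ereal (max (\<beta> * R\<^sup>2 * lb) ((\<beta> * R\<^sup>2)\<^sup>2 / (4 * \<theta>)))"
proof (rule limsup_normalized_le)
  fix \<eta> :: real
  assume "\<eta> > 0"
  moreover have "\<beta> > 0" "R > 0" "\<theta> > 0"
    using spherical_model_of_size.pos[OF model[of 1]] by auto
  ultimately obtain a0 \<delta> \<epsilon> where params: "a0 > lb" "\<delta> > 0" "0 < \<epsilon>" "\<epsilon> < \<theta>"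
    and rate: "max (\<beta> * R\<^sup>2 * a0) (\<beta> * R\<^sup>2 * \<delta> + (\<beta> * R\<^sup>2)\<^sup>2 / (4 * (\<theta> - \<epsilon>)))
      = max (\<beta> * R\<^sup>2 * lb) ((\<beta> * R\<^sup>2)\<^sup>2 / (4 * \<theta>)) + \<eta>"
    using shell_parameters_exist[of "\<beta> * R\<^sup>2" \<theta> \<eta> lb] by auto
  have "\<forall>\<^sub>F N in sequentially. ln (\<integral>\<omega>. Z_sf N \<beta> R (J N \<omega>) \<partial>M)
      \<le> ln (1 + C1 / (1 - exp (- \<epsilon> * a0 * \<delta>)))
        + real N * (max (\<beta> * R\<^sup>2 * lb) ((\<beta> * R\<^sup>2)\<^sup>2 / (4 * \<theta>)) + \<eta>)"
    using eventually_ge_at_top[of 1]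
  proof eventually_elim
    case (elim N)
    show ?case
      using spherical_model_of_size.ln_integral_Z_le[OF model[OF elim] params] by (simp only: rate)
  qed
  then show "\<exists>L. \<forall>\<^sub>F N in sequentially. ln (\<integral>\<omega>. Z_sf N \<beta> R (J N \<omega>) \<partial>M)
      \<le> L + real N * (max (\<beta> * R\<^sup>2 * lb) ((\<beta> * R\<^sup>2)\<^sup>2 / (4 * \<theta>)) + \<eta>)"
    by blast
qed

text \<open>Only integrability and symmetry of the entries and condition (1) of Hypothesis H enter the
  proof.\<close>

theorem mainTheorem5:
  fixes M :: "'w measure"
    and J :: "nat \<Rightarrow> 'w \<Rightarrow> nat \<Rightarrow> nat \<Rightarrow> real"
    and Jsq lb C1 \<theta> \<beta> R :: real
  assumes prob: "prob_space M"
    and meas: "\<And>N i j. (\<lambda>\<omega>. J N \<omega> i j) \<in> borel_measurable M"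
    and symm: "\<And>N \<omega> i j. J N \<omega> i j = J N \<omega> j i"
    and indep: "\<And>N. prob_space.indep_vars M (\<lambda>_. borel) (\<lambda>(i,j) \<omega>. J N \<omega> i j)
                        {(i,j). i \<le> j \<and> j < N}"
    and mean0: "\<And>N i j. i < N \<Longrightarrow> j < N \<Longrightarrow>
                  integrable M (\<lambda>\<omega>. J N \<omega> i j) \<and> (\<integral>\<omega>. J N \<omega> i j \<partial>M) = 0"
    and Jsq_pos: "Jsq > 0"
    and var: "\<And>N i j. i < N \<Longrightarrow> j < N \<Longrightarrow>
                  integrable M (\<lambda>\<omega>. (J N \<omega> i j)\<^sup>2) \<and> (\<integral>\<omega>. (J N \<omega> i j)\<^sup>2 \<partial>M) = Jsq"
    and subgauss: "\<exists>\<theta>0 > 0. \<exists>C::real. \<forall>N i j. i < N \<longrightarrow> j < N \<longrightarrow>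
                  (\<integral>\<^sup>+\<omega>. ennreal (exp (\<theta>0 * (J N \<omega> i j)\<^sup>2 / real N)) \<partial>M) \<le> ennreal C"
    and lb_pos: "lb > 0" and C1_pos: "C1 > 0" and \<theta>_pos: "\<theta> > 0"
    and H1: "\<And>N a. N \<ge> 1 \<Longrightarrow> a > lb \<Longrightarrow>
               measure M {\<omega> \<in> space M. \<exists>ev. eigenvalue (scaled_mat N (J N \<omega>)) ev \<and> \<bar>ev\<bar> \<ge> a}
                 \<le> C1 * exp (- \<theta> * a\<^sup>2 * real N)"
    and H2: "AE \<omega> in M. \<forall>f::real \<Rightarrow> real. continuous_on UNIV f \<and> bounded (range f) \<longrightarrow>
               (\<lambda>N. esd_avg N (scaled_mat N (J N \<omega>)) f)
                 \<longlonglongrightarrow> (\<integral>\<mu>. f \<mu> * semicircle_density lb \<mu> \<partial>lborel)"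
    and \<beta>_pos: "\<beta> > 0" and R_pos: "R > 0"
  shows "limsup (\<lambda>N. ereal ((1 / real N) * (\<integral>\<omega>. ln (Z_sf N \<beta> R (J N \<omega>)) \<partial>M)))
           \<le> limsup (\<lambda>N. ereal ((1 / real N) * ln (\<integral>\<omega>. Z_sf N \<beta> R (J N \<omega>) \<partial>M)))
       \<and> limsup (\<lambda>N. ereal ((1 / real N) * ln (\<integral>\<omega>. Z_sf N \<beta> R (J N \<omega>) \<partial>M)))
           \<le> ereal (max (\<beta> * lb * R\<^sup>2) (\<beta>\<^sup>2 * R ^ 4 / (4 * \<theta>)))"
proof -
  have model: "spherical_model_of_size M N (J N) \<beta> R lb C1 \<theta>" if "N \<ge> 1" for N
    using prob that meas symm mean0 H1 \<beta>_pos R_pos lb_pos C1_pos \<theta>_pos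
    by (auto simp: spherical_model_of_size_def spherical_model_of_size_axioms_def)
  have "max (\<beta> * R\<^sup>2 * lb) ((\<beta> * R\<^sup>2)\<^sup>2 / (4 * \<theta>)) = max (\<beta> * lb * R\<^sup>2) (\<beta>\<^sup>2 * R ^ 4 / (4 * \<theta>))"
    by (simp add: power_mult_distrib mult_ac)
  then show ?thesis
    using limsup_integral_ln_Z_sf_le[OF model] limsup_ln_integral_Z_sf_le[OF model] by simp
qed

end
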